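(* Let $\nu\ge0$, $\Psi_\nu(x)=I_{\nu+1}(x)/I_\nu(x)$ and $$\xi_\nu(x)=\frac{\log\left(1-\frac{2(\nu+1)}{x}\Psi_\nu(x)\right)}{\log\Psi_\nu(x)}.$$ Then $$\lim_{x\to\infty}\xi_\nu(x)=\frac{4(\nu+1)}{2\nu+1}.$$
   Context: $I_\nu$ denotes the modified Bessel function of the first kind of order $\nu$. *)

theory Defs
  imports "HOL-Analysis.Analysis"
begin

definition besselI :: "real \<Rightarrow> real \<Rightarrow> real" where
  "besselI nu x = (\<Sum>k. (x / 2) powr (2 * real k + nu) / (fact k * Gamma (real k + nu + 1)))"

definition besselPsi :: "real \<Rightarrow> real \<Rightarrow> real" where
  "besselPsi nu x = besselI (nu + 1) x / besselI nu x"

definition besselXi :: "real \<Rightarrow> real \<Rightarrow> real" where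
  "besselXi nu x = ln (1 - 2 * (nu + 1) / x * besselPsi nu x) / ln (besselPsi nu x)"

end

theory Submission
  imports Defs "HOL-Real_Asymp.Real_Asymp"
begin

text \<open>The power series of \<open>I\<^sub>\<nu>\<close> shows that \<open>\<Psi>\<^sub>\<nu>\<close> solves the Riccati equation
  \<open>\<Psi>' = 1 - (2\<nu>+1) \<Psi> / x - \<Psi>\<^sup>2\<close>, and the three-term recurrence
  \<open>I\<^sub>\<nu> - I\<^sub>\<nu>\<^sub>+\<^sub>2 = 2(\<nu>+1)/x I\<^sub>\<nu>\<^sub>+\<^sub>1\<close> turns the argument of the logarithm in
  \<open>\<xi>\<^sub>\<nu>\<close> into \<open>\<Psi>\<^sub>\<nu> \<Psi>\<^sub>\<nu>\<^sub>+\<^sub>1\<close>, so \<open>\<xi>\<^sub>\<nu> = 1 + ln \<Psi>\<^sub>\<nu>\<^sub>+\<^sub>1 / ln \<Psi>\<^sub>\<nu>\<close>.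
  A positive solution of \<open>f' = 1 - c f / x - f\<^sup>2\<close> (\<open>c > 0\<close>) is compared with the positive root
  \<open>r\<close> of \<open>x r\<^sup>2 + c r = x\<close>: the deviation \<open>x (f - r)\<close> satisfies a linear equation with damping
  at least \<open>1/2\<close> and a forcing term tending to \<open>0\<close>, hence tends to \<open>0\<close>. Since
  \<open>x (1 - r) \<rightarrow> c/2\<close>, this gives \<open>x ln \<Psi>\<^sub>\<nu> \<rightarrow> -(2\<nu>+1)/2\<close>, and the limit of \<open>\<xi>\<^sub>\<nu>\<close> is
  \<open>1 + (2\<nu>+3)/(2\<nu>+1)\<close>.\<close>

lemma eventually_le_if_deriv_neg_above:
  fixes \<phi> \<phi>' :: "real \<Rightarrow> real"
  assumes "\<delta> > 0"
    and "eventually (\<lambda>x. (\<phi> has_real_derivative \<phi>' x) (at x)) at_top"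
    and "eventually (\<lambda>x. \<phi> x \<ge> a \<longrightarrow> \<phi>' x \<le> -\<delta>) at_top"
  shows "eventually (\<lambda>x. \<phi> x \<le> a) at_top"
proof -
  obtain X0 where der: "\<And>x. x \<ge> X0 \<Longrightarrow> (\<phi> has_real_derivative \<phi>' x) (at x)"
    and neg: "\<And>x. x \<ge> X0 \<Longrightarrow> \<phi> x \<ge> a \<Longrightarrow> \<phi>' x \<le> -\<delta>"
    using eventually_conj[OF assms(2,3)] by (auto simp: eventually_at_top_linorder)
  have cont: "continuous_on {u..v} \<phi>" if "u \<ge> X0" for u v
    using that by (intro continuous_at_imp_continuous_on ballI DERIV_isCont[OF der]) auto
  obtain x1 where x1: "x1 \<ge> X0" "\<phi> x1 \<le> a"
  proof (rule ccontr)
    assume "\<not> thesis"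
    then have above: "\<And>x. x \<ge> X0 \<Longrightarrow> \<phi> x > a"
      using that by force
    define x where "x = X0 + (\<phi> X0 - a) / \<delta> + 1"
    have "x > X0"
      using above[of X0] \<open>\<delta> > 0\<close> unfolding x_def by (simp add: field_simps)
    then obtain z where z: "X0 < z" "z < x" "\<phi> x - \<phi> X0 = (x - X0) * \<phi>' z"
      using MVT2[of X0 x \<phi> \<phi>'] der by auto
    have "(x - X0) * \<phi>' z \<le> (x - X0) * (-\<delta>)"
      using neg[of z] above[of z] z \<open>x > X0\<close> by (intro mult_left_mono) auto
    also have "(x - X0) * (-\<delta>) = a - \<phi> X0 - \<delta>"
      unfolding x_def using \<open>\<delta> > 0\<close> by (simp add: field_simps)
    finally have "\<phi> x < a"
      using z \<open>\<delta> > 0\<close> by simp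
    with above[of x] \<open>x > X0\<close> show False
      by simp
  qed
  have "\<phi> x \<le> a" if "x \<ge> x1" for x
  proof (rule ccontr)
    assume "\<not> \<phi> x \<le> a"
    define S where "S = {t \<in> {x1..x}. \<phi> t \<le> a}"
    have "closed S"
      unfolding S_def using x1
      by (intro continuous_on_closed_Collect_le cont continuous_on_const closed_atLeastAtMost)
    moreover have "x1 \<in> S" "bdd_above S"
      using that x1 unfolding S_def by (auto intro: bdd_aboveI[of _ x])
    ultimately have "Sup S \<in> S"
      using closed_contains_Sup by blast
    define s where "s = Sup S"
    have s: "x1 \<le> s" "s < x" "\<phi> s \<le> a"
      using \<open>Sup S \<in> S\<close> \<open>\<not> \<phi> x \<le> a\<close> unfolding s_def S_def by (auto simp: order.order_iff_strict)
    have above: "\<phi> t > a" if "s < t" "t \<le> x" for t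
      using cSup_upper[OF _ \<open>bdd_above S\<close>, of t] that s unfolding s_def S_def by force
    have "\<phi> s > \<phi> x"
    proof (rule DERIV_neg_imp_decreasing_open[OF \<open>s < x\<close>])
      fix t assume "s < t" "t < x"
      then show "\<exists>y. (\<phi> has_real_derivative y) (at t) \<and> y < 0"
        using der[of t] neg[of t] above[of t] s x1 \<open>\<delta> > 0\<close> by (intro exI[of _ "\<phi>' t"]) force
    qed (use cont s x1 in simp)
    with s \<open>\<not> \<phi> x \<le> a\<close> show False
      by simp
  qed
  then show ?thesis
    unfolding eventually_at_top_linorder by blast
qed

lemma tendsto_zero_if_deriv_damped:
  fixes \<phi> g D :: "real \<Rightarrow> real"
  assumes "\<gamma> > 0"
    and der: "eventually (\<lambda>x. (\<phi> has_real_derivative - g x * \<phi> x - D x) (at x)) at_top"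
    and damping: "eventually (\<lambda>x. g x \<ge> \<gamma>) at_top"
    and "(D \<longlongrightarrow> 0) at_top"
  shows "(\<phi> \<longlongrightarrow> 0) at_top"
proof (rule tendstoI)
  fix e :: real assume "e > 0"
  then have "eventually (\<lambda>x. \<bar>D x\<bar> < \<gamma> * e / 4) at_top"
    using tendstoD[OF \<open>(D \<longlongrightarrow> 0) at_top\<close>, of "\<gamma> * e / 4"] \<open>\<gamma> > 0\<close> by simp
  with damping have small: "eventually (\<lambda>x. g x \<ge> \<gamma> \<and> \<bar>D x\<bar> < \<gamma> * e / 4) at_top"
    by eventually_elim simp
  have bound: "\<gamma> * (e / 2) \<le> g x * y" if "g x \<ge> \<gamma>" "y \<ge> e / 2" for x y
    using that \<open>\<gamma> > 0\<close> \<open>e > 0\<close> by (intro mult_mono) auto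
  have "eventually (\<lambda>x. \<phi> x \<le> e / 2) at_top"
  proof (rule eventually_le_if_deriv_neg_above[OF _ der])
    show "eventually (\<lambda>x. \<phi> x \<ge> e / 2 \<longrightarrow> - g x * \<phi> x - D x \<le> - (\<gamma> * e / 4)) at_top"
      using small by eventually_elim (use bound in fastforce)
  qed (use \<open>\<gamma> > 0\<close> \<open>e > 0\<close> in simp)
  moreover have "eventually (\<lambda>x. - \<phi> x \<le> e / 2) at_top"
  proof (rule eventually_le_if_deriv_neg_above)
    show "eventually (\<lambda>x. ((\<lambda>x. - \<phi> x) has_real_derivative - (- g x * \<phi> x - D x)) (at x)) at_top"
      using der by eventually_elim (rule DERIV_minus)
    show "eventually (\<lambda>x. - \<phi> x \<ge> e / 2 \<longrightarrow> - (- g x * \<phi> x - D x) \<le> - (\<gamma> * e / 4)) at_top"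
      using small by eventually_elim (use bound in fastforce)
  qed (use \<open>\<gamma> > 0\<close> \<open>e > 0\<close> in simp)
  ultimately show "eventually (\<lambda>x. dist (\<phi> x) 0 < e) at_top"
    by eventually_elim (use \<open>e > 0\<close> in auto)
qed

definition riccati_root :: "real \<Rightarrow> real \<Rightarrow> real" where
  "riccati_root c x = (sqrt (c^2 + 4 * x^2) - c) / (2 * x)"

lemma riccati_root_eq: "x > 0 \<Longrightarrow> x * (riccati_root c x)^2 + c * riccati_root c x = x"
  unfolding riccati_root_def by (simp add: add_nonneg_pos field_simps power2_eq_square)

lemma has_real_derivative_mult_riccati_root:
  assumes "x > 0"
  shows "((\<lambda>x. x * riccati_root c x) has_real_derivative 2 * x / sqrt (c^2 + 4 * x^2)) (at x)"
proof -
  have "c^2 + 4 * x^2 > 0"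
    using assms by (simp add: add_nonneg_pos)
  then have "((\<lambda>x. (sqrt (c^2 + 4 * x^2) - c) / 2) has_real_derivative
      2 * x / sqrt (c^2 + 4 * x^2)) (at x)"
    by (auto intro!: derivative_eq_intros simp: field_simps power2_eq_square)
  then show ?thesis
    by (rule has_field_derivative_transform_within_open[where S = "{0<..}"])
       (use assms in \<open>auto simp: riccati_root_def\<close>)
qed

lemma riccati_linearization:
  fixes x c f r :: real
  assumes "x > 0" "x * r^2 + c * r = x"
  shows "f + x * (1 - c * f / x - f^2) = - (f + r + (c - 1) / x) * (x * (f - r)) + r"
  using assms
  by (simp add: field_simps power2_eq_square) (metis distrib_left mult.commute mult.left_commute)

lemma riccati_asymptotics:
  fixes f :: "real \<Rightarrow> real"
  assumes "c > 0"
    and pos: "eventually (\<lambda>x. f x > 0) at_top"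
    and der: "eventually (\<lambda>x. (f has_real_derivative 1 - c * f x / x - (f x)^2) (at x)) at_top"
  shows "((\<lambda>x. x * (1 - f x)) \<longlongrightarrow> c / 2) at_top"
proof -
  let ?r = "riccati_root c" and ?s = "\<lambda>x. sqrt (c^2 + 4 * x^2)"
  define \<phi> where "\<phi> x = x * (f x - ?r x)" for x
  have root_lim: "(?r \<longlongrightarrow> 1) at_top"
    unfolding riccati_root_def using \<open>c > 0\<close> by real_asymp
  have drift_lim: "((\<lambda>x. 2 * x / ?s x - ?r x) \<longlongrightarrow> 0) at_top"
    unfolding riccati_root_def using \<open>c > 0\<close> by real_asymp
  have offset_lim: "((\<lambda>x. x * (1 - ?r x)) \<longlongrightarrow> c / 2) at_top"
    unfolding riccati_root_def using \<open>c > 0\<close> by real_asymp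
  have "((\<lambda>x. (c - 1) / x) \<longlongrightarrow> 0) at_top"
    by real_asymp
  then have "eventually (\<lambda>x. (c - 1) / x > - 1 / 4) at_top"
    by (rule order_tendstoD) simp
  moreover have "eventually (\<lambda>x. ?r x > 3 / 4) at_top"
    using root_lim by (rule order_tendstoD) simp
  ultimately have large: "eventually (\<lambda>x. x > 0 \<and> f x + ?r x + (c - 1) / x \<ge> 1 / 2
      \<and> (f has_real_derivative 1 - c * f x / x - (f x)^2) (at x)) at_top"
    using pos der eventually_gt_at_top[of 0] by eventually_elim (intro conjI; linarith | blast)
  have "(\<phi> \<longlongrightarrow> 0) at_top"
  proof (rule tendsto_zero_if_deriv_damped[of "1 / 2" \<phi>
      "\<lambda>x. f x + ?r x + (c - 1) / x" "\<lambda>x. 2 * x / ?s x - ?r x"])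
    show "eventually (\<lambda>x. (\<phi> has_real_derivative
        - (f x + ?r x + (c - 1) / x) * \<phi> x - (2 * x / ?s x - ?r x)) (at x)) at_top"
      using large
    proof eventually_elim
      case (elim x)
      then have "((\<lambda>x. x * f x) has_real_derivative f x + x * (1 - c * f x / x - (f x)^2)) (at x)"
        by (auto intro!: derivative_eq_intros)
      from DERIV_diff[OF this has_real_derivative_mult_riccati_root[of x c]]
      have d: "(\<phi> has_real_derivative f x + x * (1 - c * f x / x - (f x)^2) - 2 * x / ?s x) (at x)"
        using elim unfolding \<phi>_def[abs_def] right_diff_distrib by simp
      have lin: "f x + x * (1 - c * f x / x - (f x)^2)
          = - (f x + ?r x + (c - 1) / x) * (x * (f x - ?r x)) + ?r x"
        using elim riccati_root_eq by (intro riccati_linearization) auto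
      show ?case
        using d unfolding lin by (rule DERIV_cong) (simp add: \<phi>_def)
    qed
    show "eventually (\<lambda>x. f x + ?r x + (c - 1) / x \<ge> 1 / 2) at_top"
      using large by eventually_elim simp
  qed (use drift_lim in simp_all)
  with offset_lim have "((\<lambda>x. x * (1 - ?r x) - \<phi> x) \<longlongrightarrow> c / 2 - 0) at_top"
    by (intro tendsto_diff)
  then show ?thesis
    unfolding \<phi>_def by (simp add: algebra_simps)
qed

lemma tendsto_mult_ln_if_tendsto_mult_one_minus:
  fixes f :: "real \<Rightarrow> real"
  assumes lim: "((\<lambda>x. x * (1 - f x)) \<longlongrightarrow> L) at_top"
    and pos: "eventually (\<lambda>x. f x > 0) at_top"
  shows "((\<lambda>x. x * ln (f x)) \<longlongrightarrow> - L) at_top"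
proof (rule tendsto_sandwich)
  have "((\<lambda>x. 1 - x * (1 - f x) * (1 / x)) \<longlongrightarrow> 1 - L * 0) at_top"
    by (intro tendsto_intros lim) real_asymp
  moreover have "eventually (\<lambda>x. 1 - x * (1 - f x) * (1 / x) = f x) at_top"
    using eventually_gt_at_top[of 0] by eventually_elim simp
  ultimately have "(f \<longlongrightarrow> 1) at_top"
    by (simp add: tendsto_cong)
  show "((\<lambda>x. - (x * (1 - f x)) / f x) \<longlongrightarrow> - L) at_top"
    using tendsto_divide[OF tendsto_minus[OF lim] \<open>(f \<longlongrightarrow> 1) at_top\<close>] by simp
  show "((\<lambda>x. - (x * (1 - f x))) \<longlongrightarrow> - L) at_top"
    using lim by (rule tendsto_minus)
  show "eventually (\<lambda>x. - (x * (1 - f x)) / f x \<le> x * ln (f x)) at_top"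
    using pos eventually_gt_at_top[of 0]
  proof eventually_elim
    case (elim x)
    have "ln (1 / f x) \<le> 1 / f x - 1"
      using elim by (intro ln_le_minus_one) simp
    then have "- ((1 - f x) / f x) \<le> ln (f x)"
      using elim by (simp add: ln_div field_simps)
    then show ?case
      using mult_left_mono[of _ _ x] elim by fastforce
  qed
  show "eventually (\<lambda>x. x * ln (f x) \<le> - (x * (1 - f x))) at_top"
    using pos eventually_gt_at_top[of 0]
  proof eventually_elim
    case (elim x)
    then have "x * ln (f x) \<le> x * (f x - 1)"
      by (intro mult_left_mono ln_le_minus_one) auto
    then show ?case
      by (simp add: algebra_simps)
  qed
qed

definition besselI_coeff :: "real \<Rightarrow> nat \<Rightarrow> real" where
  "besselI_coeff m k = 1 / (fact k * Gamma (real k + m + 1))"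

text \<open>\<open>I\<^sub>m(x) = (x/2)\<^sup>m F\<^sub>m((x/2)\<^sup>2)\<close> with \<open>F\<^sub>m\<close> an ordinary entire power series, to which
  termwise differentiation applies.\<close>

definition besselI_series :: "real \<Rightarrow> real \<Rightarrow> real" where
  "besselI_series m z = (\<Sum>k. besselI_coeff m k * z ^ k)"

lemma Gamma_plus1_pos: "(y::real) > 0 \<Longrightarrow> Gamma (y + 1) = y * Gamma y"
  by (rule Gamma_plus1) (auto dest: nonpos_Ints_nonpos)

lemma besselI_coeff_pos: "m > -1 \<Longrightarrow> besselI_coeff m k > 0"
  unfolding besselI_coeff_def by simp

lemma besselI_coeff_Suc:
  assumes "m > -1"
  shows "besselI_coeff m (Suc k) = besselI_coeff m k / ((real k + 1) * (real k + m + 1))"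
proof -
  have "Gamma (real (Suc k) + m + 1) = (real k + m + 1) * Gamma (real k + m + 1)"
    using Gamma_plus1_pos[of "real k + m + 1"] assms by (simp add: add_ac)
  then show ?thesis
    using assms unfolding besselI_coeff_def by (simp add: field_simps)
qed

lemma summable_besselI_coeff:
  assumes "m > -1"
  shows "summable (\<lambda>k. besselI_coeff m k * z ^ k)"
proof (rule summable_ratio_test[of "1/2" "nat \<lceil>2 * \<bar>z\<bar>\<rceil>"])
  fix n assume "n \<ge> nat \<lceil>2 * \<bar>z\<bar>\<rceil>"
  then have "2 * \<bar>z\<bar> \<le> real n" by linarith
  also have "\<dots> \<le> real n * (real n + m + 1) + (real n + m + 1)"
    using assms by simp
  also have "\<dots> = (real n + 1) * (real n + m + 1)"
    by (simp add: algebra_simps)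
  finally have le: "\<bar>z\<bar> / ((real n + 1) * (real n + m + 1)) \<le> 1/2"
    using assms by (simp add: pos_divide_le_eq)
  have pos: "(real n + 1) * (real n + m + 1) > 0" "besselI_coeff m n > 0"
    using assms besselI_coeff_pos by auto
  have "norm (besselI_coeff m (Suc n) * z ^ Suc n)
      = besselI_coeff m n * \<bar>z\<bar> ^ n * (\<bar>z\<bar> / ((real n + 1) * (real n + m + 1)))"
    using pos assms by (simp add: besselI_coeff_Suc abs_mult power_abs)
  also have "\<dots> \<le> besselI_coeff m n * \<bar>z\<bar> ^ n * (1/2)"
    using le pos by (intro mult_left_mono) auto
  finally show "norm (besselI_coeff m (Suc n) * z ^ Suc n) \<le> 1/2 * norm (besselI_coeff m n * z ^ n)"
    using pos by (simp add: abs_mult power_abs)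
qed simp

lemma diffs_besselI_coeff: "diffs (besselI_coeff m) = besselI_coeff (m + 1)"
  by (rule ext) (simp add: diffs_def besselI_coeff_def add_ac)

lemma besselI_series_deriv:
  assumes "m > -1"
  shows "(besselI_series m has_real_derivative besselI_series (m + 1) z) (at z)"
  using termdiffs_strong_converges_everywhere[OF summable_besselI_coeff[OF assms]]
  unfolding besselI_series_def[abs_def] diffs_besselI_coeff .

lemma besselI_series_pos: "m > -1 \<Longrightarrow> z > 0 \<Longrightarrow> besselI_series m z > 0"
  unfolding besselI_series_def
  by (intro suminf_pos summable_besselI_coeff mult_pos_pos besselI_coeff_pos) auto

lemma besselI_series_recurrence:
  assumes "m > -1"
  shows "besselI_series m z - z * besselI_series (m + 2) z = (m + 1) * besselI_series (m + 1) z"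
proof -
  let ?c = "besselI_coeff"
  define g where "g k = ?c m k * z ^ k - (m + 1) * (?c (m + 1) k * z ^ k)" for k
  have coeff_rec: "?c m (Suc k) - (m + 1) * ?c (m + 1) (Suc k) = ?c (m + 2) k" for k
  proof -
    define G where "G = Gamma (real k + m + 2)"
    have "G > 0" using assms unfolding G_def by simp
    have G3: "Gamma (real k + m + 3) = (real k + m + 2) * G"
      using Gamma_plus1_pos[of "real k + m + 2"] assms unfolding G_def by (simp add: add_ac)
    have "?c m (Suc k) = 1 / ((real k + 1) * fact k * G)"
      unfolding besselI_coeff_def G_def by (simp add: add_ac)
    moreover have "?c (m + 1) (Suc k) = 1 / ((real k + 1) * fact k * ((real k + m + 2) * G))"
      unfolding besselI_coeff_def G3[symmetric] by (simp add: add_ac)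
    moreover have "?c (m + 2) k = 1 / (fact k * ((real k + m + 2) * G))"
      unfolding besselI_coeff_def G3[symmetric] by (simp add: add_ac)
    moreover have alg: "1 / (a * F * G) - (m + 1) * (1 / (a * F * (b * G))) = 1 / (F * (b * G))"
      if "a > 0" "b > 0" "b - (m + 1) = a" "F > 0" for a b F
      using that(1,2,4) \<open>G > 0\<close> by (simp add: field_simps) (simp add: that(3)[symmetric] algebra_simps)
    ultimately show ?thesis
      using alg[of "real k + 1" "real k + m + 2" "fact k"] assms by simp
  qed
  have g_sums: "g sums (besselI_series m z - (m + 1) * besselI_series (m + 1) z)"
    unfolding g_def besselI_series_def using assms
    by (intro sums_diff sums_mult summable_sums summable_besselI_coeff) auto
  have "(\<lambda>k. z * (?c (m + 2) k * z ^ k)) sums (z * besselI_series (m + 2) z)"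
    unfolding besselI_series_def using assms
    by (intro sums_mult summable_sums summable_besselI_coeff) auto
  moreover have "(\<lambda>k. z * (?c (m + 2) k * z ^ k)) = (\<lambda>k. g (Suc k))"
    unfolding g_def by (auto simp: coeff_rec[symmetric] algebra_simps)
  moreover have "g 0 = 0"
    using assms Gamma_plus1_pos[of "m + 1"] unfolding g_def besselI_coeff_def by (simp add: add_ac)
  ultimately have "g sums (z * besselI_series (m + 2) z)"
    using sums_Suc_iff[of g] by simp
  with g_sums show ?thesis
    using sums_unique2 by fastforce
qed

lemma besselI_eq_series:
  assumes "m > -1" "x > 0"
  shows "besselI m x = (x / 2) powr m * besselI_series m ((x / 2)^2)"
proof -
  have "(x / 2) powr (2 * real k + m) = (x / 2) powr m * ((x / 2)^2)^k" for k
    using assms powr_realpow[of "x / 2" "2 * k"] by (simp add: powr_add power_mult)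
  then have "besselI m x = (\<Sum>k. (x / 2) powr m * (besselI_coeff m k * ((x / 2)^2)^k))"
    unfolding besselI_def besselI_coeff_def by simp
  also have "\<dots> = (x / 2) powr m * besselI_series m ((x / 2)^2)"
    unfolding besselI_series_def using summable_besselI_coeff[OF assms(1)] by (rule suminf_mult)
  finally show ?thesis .
qed

lemma besselI_pos: "m > -1 \<Longrightarrow> x > 0 \<Longrightarrow> besselI m x > 0"
  by (simp add: besselI_eq_series besselI_series_pos)

lemma besselI_recurrence:
  assumes "m > -1" "x > 0"
  shows "besselI m x - besselI (m + 2) x = 2 * (m + 1) / x * besselI (m + 1) x"
proof -
  let ?z = "(x / 2)^2" and ?F = besselI_series
  have "besselI m x - besselI (m + 2) x = (x / 2) powr m * (?F m ?z - ?z * ?F (m + 2) ?z)"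
    using assms by (simp add: besselI_eq_series powr_add algebra_simps power2_eq_square)
  also have "\<dots> = (x / 2) powr m * ((m + 1) * ?F (m + 1) ?z)"
    by (simp add: besselI_series_recurrence assms(1))
  also have "\<dots> = 2 * (m + 1) / x * besselI (m + 1) x"
    using assms by (simp add: besselI_eq_series powr_add field_simps)
  finally show ?thesis .
qed

lemma besselI_deriv:
  assumes "m > -1" "x > 0"
  shows "(besselI m has_real_derivative besselI (m + 1) x + m / x * besselI m x) (at x)"
proof -
  let ?F = besselI_series
  have "((\<lambda>x. (x / 2) powr m * ?F m ((x / 2)^2)) has_real_derivative
      m * (x / 2) powr (m - 1) * (1 / 2) * ?F m ((x / 2)^2)
        + (x / 2) powr m * (?F (m + 1) ((x / 2)^2) * (2 * (x / 2) * (1 / 2)))) (at x)"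
    using assms
    by (auto intro!: derivative_eq_intros DERIV_chain2[OF besselI_series_deriv[OF assms(1)]])
  also have "m * (x / 2) powr (m - 1) * (1 / 2) * ?F m ((x / 2)^2)
        + (x / 2) powr m * (?F (m + 1) ((x / 2)^2) * (2 * (x / 2) * (1 / 2)))
      = besselI (m + 1) x + m / x * besselI m x"
    using assms by (simp add: besselI_eq_series powr_add powr_diff field_simps)
  finally show ?thesis
    by (rule has_field_derivative_transform_within_open[where S = "{0<..}"])
       (use assms in \<open>simp_all add: besselI_eq_series\<close>)
qed

lemma besselPsi_pos: "m > -1 \<Longrightarrow> x > 0 \<Longrightarrow> besselPsi m x > 0"
  unfolding besselPsi_def by (simp add: besselI_pos)

lemma besselPsi_mult_besselPsi:
  assumes "m > -1" "x > 0"
  shows "besselPsi m x * besselPsi (m + 1) x = 1 - 2 * (m + 1) / x * besselPsi m x"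
proof -
  have "besselI (m + 1 + 1) x = besselI m x - 2 * (m + 1) / x * besselI (m + 1) x"
    using besselI_recurrence[OF assms] by (simp add: add.assoc)
  then show ?thesis
    using assms besselI_pos[OF assms] besselI_pos[of "m + 1" x]
    unfolding besselPsi_def by (simp add: field_simps)
qed

lemma besselPsi_deriv:
  assumes "m > -1" "x > 0"
  shows "(besselPsi m has_real_derivative
           1 - (2 * m + 1) * besselPsi m x / x - (besselPsi m x)^2) (at x)"
proof -
  let ?P = "besselI m x" and ?Q = "besselI (m + 1) x"
  have "besselI (m + 1 + 1) x + (m + 1) / x * ?Q = ?P - (m + 1) / x * ?Q"
    using besselI_recurrence[OF assms] by (simp add: add.assoc field_simps)
  moreover have "(besselI (m + 1) has_real_derivative besselI (m + 1 + 1) x + (m + 1) / x * ?Q) (at x)"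
    using assms by (intro besselI_deriv) auto
  ultimately have dQ: "(besselI (m + 1) has_real_derivative ?P - (m + 1) / x * ?Q) (at x)"
    by (simp only:)
  have "?P > 0"
    using assms by (rule besselI_pos)
  have "((\<lambda>x. besselI (m + 1) x / besselI m x) has_real_derivative
      ((?P - (m + 1) / x * ?Q) * ?P - ?Q * (?Q + m / x * ?P)) / (?P * ?P)) (at x)"
    using DERIV_divide[OF dQ besselI_deriv[OF assms]] \<open>?P > 0\<close> by simp
  also have "((?P - (m + 1) / x * ?Q) * ?P - ?Q * (?Q + m / x * ?P)) / (?P * ?P)
      = 1 - (2 * m + 1) * besselPsi m x / x - (besselPsi m x)^2"
    using \<open>?P > 0\<close> assms unfolding besselPsi_def by (simp add: field_simps power2_eq_square)
  finally show ?thesis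
    unfolding besselPsi_def[abs_def] .
qed

lemma besselXi_eq:
  assumes "m > -1" "x > 0"
  shows "besselXi m x = (ln (besselPsi m x) + ln (besselPsi (m + 1) x)) / ln (besselPsi m x)"
  using assms besselPsi_pos[OF assms] besselPsi_pos[of "m + 1" x]
  unfolding besselXi_def besselPsi_mult_besselPsi[OF assms, symmetric] by (simp add: ln_mult)

lemma besselPsi_asymptotics:
  assumes "m > - 1 / 2"
  shows "((\<lambda>x. x * ln (besselPsi m x)) \<longlongrightarrow> - ((2 * m + 1) / 2)) at_top"
proof (rule tendsto_mult_ln_if_tendsto_mult_one_minus)
  have "m > -1"
    using assms by simp
  show pos: "eventually (\<lambda>x. besselPsi m x > 0) at_top"
    using eventually_gt_at_top[of 0] by eventually_elim (use \<open>m > -1\<close> besselPsi_pos in blast)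
  have "eventually (\<lambda>x. (besselPsi m has_real_derivative
      1 - (2 * m + 1) * besselPsi m x / x - (besselPsi m x)^2) (at x)) at_top"
    using eventually_gt_at_top[of 0] by eventually_elim (use \<open>m > -1\<close> besselPsi_deriv in blast)
  with pos show "((\<lambda>x. x * (1 - besselPsi m x)) \<longlongrightarrow> (2 * m + 1) / 2) at_top"
    using assms by (intro riccati_asymptotics) auto
qed

theorem mainTheorem7:
  fixes nu :: real
  assumes "nu \<ge> 0"
  shows "(besselXi nu \<longlongrightarrow> 4 * (nu + 1) / (2 * nu + 1)) at_top"
proof -
  let ?L = "\<lambda>m x. x * ln (besselPsi m x)"
  have "((\<lambda>x. (?L nu x + ?L (nu + 1) x) / ?L nu x)
      \<longlongrightarrow> (- ((2 * nu + 1) / 2) + - ((2 * (nu + 1) + 1) / 2)) / - ((2 * nu + 1) / 2)) at_top"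
    using assms by (intro tendsto_intros besselPsi_asymptotics) auto
  moreover have "(- ((2 * nu + 1) / 2) + - ((2 * (nu + 1) + 1) / 2)) / - ((2 * nu + 1) / 2)
      = 4 * (nu + 1) / (2 * nu + 1)"
    using assms by (simp add: field_simps)
  moreover have "eventually (\<lambda>x. (?L nu x + ?L (nu + 1) x) / ?L nu x = besselXi nu x) at_top"
    using eventually_gt_at_top[of 0]
    by eventually_elim (use assms in \<open>simp add: besselXi_eq flip: distrib_left\<close>)
  ultimately show ?thesis
    by (simp add: tendsto_cong)
qed

end
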